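(* Let $G=\mathbb{Z}/2$, regarded as a one-object category, with $R_0=\ast$ and $c:\ast\to G$ the unique functor, so that $\mathbf{D}_G^{op}$ consists of two objects and two parallel arrows between them. Let $\mathcal{T}=\mathbf{Cat}$ be the tribe of small categories whose fibrations are the isofibrations. For a small category $C$, let $X=(C,\mathrm{id}_C)\in\mathbf{Cat}^{G^{op}}$ be $C$ with the trivial action. Then $X$ is $p$-fibrant (i.e. $p^*X$ is Reedy fibrant in $\mathbf{Cat}^{\mathbf{D}_G^{op}}$) if and only if the diagonal functor $C\to C\times C$ is an isofibration, if and only if $C$ is gaunt (every isomorphism of $C$ is an identity). In particular, the $p$-fibrations on $\mathbf{Cat}^{G^{op}}_f$ do not coincide with the pointwise fibrations.
   Context: An isofibration is a functor $F:A\to B$ such that for every object $a$ of $A$ and isomorphism $F(a)\cong b$ in $B$ there is an isomorphism $a\cong a'$ in $A$ mapped to it. $\mathbf{Cat}$ with isofibrations as fibrations is a tribe. Construction of $\mathbf{D}_G$ and $p$: with $\mathbf{F}$ the free-category comonad on $\mathbf{Cat}$, $\mathbf{F}_\simeq(G)$ is the pushout of $\ast\leftarrow\mathbf{F}(\ast)\to\mathbf{F}(G)$, with induced functor $p_0:\mathbf{F}_\simeq(G)\to G$; a "free isomorphism" is the image of a length-one path in $G$. In the twisted arrow category, morphisms from $u:a\to b$ to $u':a'\to b'$ are pairs $(s:a'\to a,t:b\to b')$ with $u'=tus$. $\mathbf{D}_G$ is the full subcategory of $\mathbf{Tw}(\mathbf{F}_\simeq(G))$ on the identity arrow and the free isomorphisms;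 $p$ sends $u:a\to b$ to $p_0(b)$ and $(s,t)$ to $p_0(t)$. A diagram $X$ is $p$-fibrant if $p^*X$ is Reedy fibrant, i.e. each matching map of $p^*X$ (to the limit over non-identity maps into the object in $\mathbf{D}_G$) is a fibration. *)

theory Defs
  imports "HOL-Library.FuncSet"
begin

record ('o,'m) cat =
  Obj  :: "'o set"
  Arr  :: "'m set"
  Dom  :: "'m \<Rightarrow> 'o"
  Cod  :: "'m \<Rightarrow> 'o"
  Id   :: "'o \<Rightarrow> 'm"
  Comp :: "'m \<Rightarrow> 'm \<Rightarrow> 'm"   (* Comp C g f = g \<circ> f *)

definition category :: "('o,'m) cat \<Rightarrow> bool" where
  "category C \<longleftrightarrow>
     (\<forall>f\<in>Arr C. Dom C f \<in> Obj C \<and> Cod C f \<in> Obj C) \<and>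
     (\<forall>x\<in>Obj C. Id C x \<in> Arr C \<and> Dom C (Id C x) = x \<and> Cod C (Id C x) = x) \<and>
     (\<forall>f\<in>Arr C. \<forall>g\<in>Arr C. Cod C f = Dom C g \<longrightarrow>
        Comp C g f \<in> Arr C \<and> Dom C (Comp C g f) = Dom C f \<and> Cod C (Comp C g f) = Cod C g) \<and>
     (\<forall>f\<in>Arr C. Comp C f (Id C (Dom C f)) = f \<and> Comp C (Id C (Cod C f)) f = f) \<and>
     (\<forall>f\<in>Arr C. \<forall>g\<in>Arr C. \<forall>h\<in>Arr C. Cod C f = Dom C g \<longrightarrow> Cod C g = Dom C h \<longrightarrow>
        Comp C h (Comp C g f) = Comp C (Comp C h g) f)"

definition iso :: "('o,'m) cat \<Rightarrow> 'm \<Rightarrow> bool" where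
  "iso C f \<longleftrightarrow> f \<in> Arr C \<and>
     (\<exists>g\<in>Arr C. Dom C g = Cod C f \<and> Cod C g = Dom C f \<and>
        Comp C g f = Id C (Dom C f) \<and> Comp C f g = Id C (Cod C f))"

definition "functor" :: "('o,'m) cat \<Rightarrow> ('p,'n) cat \<Rightarrow> ('o \<Rightarrow> 'p) \<Rightarrow> ('m \<Rightarrow> 'n) \<Rightarrow> bool" where
  "functor A B Fo Fa \<longleftrightarrow>
     (\<forall>x\<in>Obj A. Fo x \<in> Obj B) \<and>
     (\<forall>f\<in>Arr A. Fa f \<in> Arr B \<and> Dom B (Fa f) = Fo (Dom A f) \<and> Cod B (Fa f) = Fo (Cod A f)) \<and>
     (\<forall>x\<in>Obj A. Fa (Id A x) = Id B (Fo x)) \<and>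
     (\<forall>f\<in>Arr A. \<forall>g\<in>Arr A. Cod A f = Dom A g \<longrightarrow> Fa (Comp A g f) = Comp B (Fa g) (Fa f))"

definition isofibration :: "('o,'m) cat \<Rightarrow> ('p,'n) cat \<Rightarrow> ('o \<Rightarrow> 'p) \<Rightarrow> ('m \<Rightarrow> 'n) \<Rightarrow> bool" where
  "isofibration A B Fo Fa \<longleftrightarrow> functor A B Fo Fa \<and>
     (\<forall>a\<in>Obj A. \<forall>\<beta>. iso B \<beta> \<and> Dom B \<beta> = Fo a \<longrightarrow>
        (\<exists>\<alpha>. iso A \<alpha> \<and> Dom A \<alpha> = a \<and> Fa \<alpha> = \<beta>))"

definition gaunt :: "('o,'m) cat \<Rightarrow> bool" where
  "gaunt C \<longleftrightarrow> (\<forall>f. iso C f \<longrightarrow> f = Id C (Dom C f))"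

definition prod_cat :: "('o,'m) cat \<Rightarrow> ('p,'n) cat \<Rightarrow> ('o \<times> 'p, 'm \<times> 'n) cat" where
  "prod_cat A B = \<lparr> Obj = Obj A \<times> Obj B, Arr = Arr A \<times> Arr B,
     Dom = (\<lambda>(f,g). (Dom A f, Dom B g)), Cod = (\<lambda>(f,g). (Cod A f, Cod B g)),
     Id = (\<lambda>(x,y). (Id A x, Id B y)),
     Comp = (\<lambda>(f',g') (f,g). (Comp A f' f, Comp B g' g)) \<rparr>"

text \<open>Power (product indexed by a set I) of a category; for I empty this is the
  terminal category.\<close>
definition pow_cat :: "'i set \<Rightarrow> ('o,'m) cat \<Rightarrow> ('i \<Rightarrow> 'o, 'i \<Rightarrow> 'm) cat" where
  "pow_cat I C = \<lparr> Obj = I \<rightarrow>\<^sub>E Obj C, Arr = I \<rightarrow>\<^sub>E Arr C,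
     Dom = (\<lambda>f. restrict (\<lambda>i. Dom C (f i)) I), Cod = (\<lambda>f. restrict (\<lambda>i. Cod C (f i)) I),
     Id = (\<lambda>x. restrict (\<lambda>i. Id C (x i)) I),
     Comp = (\<lambda>g f. restrict (\<lambda>i. Comp C (g i) (f i)) I) \<rparr>"

definition unit_cat :: "(unit, unit) cat" where
  "unit_cat = \<lparr> Obj = {()}, Arr = {()}, Dom = (\<lambda>_. ()), Cod = (\<lambda>_. ()),
     Id = (\<lambda>_. ()), Comp = (\<lambda>_ _. ()) \<rparr>"

text \<open>G = Z/2 is encoded as bool (False = unit, True = generator g, group law xor).
  F_\<simeq>(G) has one object and its morphisms form the free monoid on g, encoded as nat
  (n stands for g^n); p_0 sends g^n to g^(n mod 2).  An object of Tw(F_\<simeq>(G)) is an arrow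
  g^m; a morphism (s,t) : g^m \<rightarrow> g^n satisfies g^n = t g^m s, i.e. n = s + m + t.
  D_G is the full subcategory on the identity (m = 0) and the free isomorphism g (m = 1).
  A morphism of D_G is encoded as the triple (m, s, t) (source g^m, target g^(s+m+t)).\<close>

definition DG :: "(nat, nat \<times> nat \<times> nat) cat" where
  "DG = \<lparr> Obj = {0, 1},
          Arr = {(m, s, t). m \<in> {0,1} \<and> s + m + t \<in> {0,1}},
          Dom = (\<lambda>(m, s, t). m), Cod = (\<lambda>(m, s, t). s + m + t),
          Id = (\<lambda>m. (m, 0, 0)),
          Comp = (\<lambda>(m', s', t') (m, s, t). (m, s + s', t' + t)) \<rparr>"

text \<open>p : D_G \<rightarrow> G, (s,t) \<mapsto> p_0(t).\<close>
definition p_arr :: "nat \<times> nat \<times> nat \<Rightarrow> bool" where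
  "p_arr = (\<lambda>(m, s, t). odd t)"

definition nonid_into :: "nat \<Rightarrow> (nat \<times> nat \<times> nat) set" where
  "nonid_into d = {f \<in> Arr DG. Cod DG f = d \<and> f \<noteq> Id DG d}"

text \<open>The matching category of D_G at any object is discrete (no non-identity morphisms
  between non-identity maps into d), so the matching object of p^*X at d is the product
  over nonid_into d of the values of p^*X, i.e. a power of C.\<close>
lemma DG_matching_discrete:
  assumes "f \<in> nonid_into d" "f' \<in> nonid_into d" "h \<in> Arr DG"
    and "Dom DG h = Dom DG f" "Cod DG h = Dom DG f'" "Comp DG f' h = f"
  shows "h = Id DG (Dom DG h)"
  using assms by (auto simp: nonid_into_def DG_def split: prod.splits)

text \<open>A G^op-object of Cat is a category C with an action of G by endofunctors, given by
  actO / actA (act True = action of g).  p^*X sends every object of D_G to C and a morphism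
  f of D_G to the endofunctor act (p f) (contravariantly).  The matching map at d is the
  functor C \<rightarrow> C^(nonid_into d), x \<mapsto> (X(p f) x)_f.\<close>
definition match_obj :: "(bool \<Rightarrow> 'o \<Rightarrow> 'o) \<Rightarrow> nat \<Rightarrow> 'o \<Rightarrow> (nat \<times> nat \<times> nat \<Rightarrow> 'o)" where
  "match_obj actO d x = restrict (\<lambda>f. actO (p_arr f) x) (nonid_into d)"

definition match_arr :: "(bool \<Rightarrow> 'm \<Rightarrow> 'm) \<Rightarrow> nat \<Rightarrow> 'm \<Rightarrow> (nat \<times> nat \<times> nat \<Rightarrow> 'm)" where
  "match_arr actA d u = restrict (\<lambda>f. actA (p_arr f) u) (nonid_into d)"

text \<open>X is p-fibrant iff p^*X is Reedy fibrant: every matching map is an isofibration.\<close>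
definition p_fibrant :: "('o,'m) cat \<Rightarrow> (bool \<Rightarrow> 'o \<Rightarrow> 'o) \<Rightarrow> (bool \<Rightarrow> 'm \<Rightarrow> 'm) \<Rightarrow> bool" where
  "p_fibrant C actO actA \<longleftrightarrow>
     (\<forall>d\<in>Obj DG. isofibration C (pow_cat (nonid_into d) C) (match_obj actO d) (match_arr actA d))"

end

theory Submission
  imports Defs
begin

text \<open>With the trivial action every matching map of \<open>p\<^sup>*X\<close> is the constant functor
  \<open>C \<rightarrow> C\<^bsup>M\<^esub>\<close>, where \<open>M\<close> is the set of non-identity maps of \<open>D\<^sub>G\<close> into the object:
  empty for the identity arrow, and the two maps \<open>(g,1)\<close> and \<open>(1,g)\<close> into the free
  isomorphism \<open>g\<close>.  A constant functor into a power with two distinct factors is an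
  isofibration only if every isomorphism \<open>f\<close> is an identity, since the lift of
  \<open>(f, id)\<close> must be constant; conversely, in a gaunt category the only isomorphisms are
  identities, which lift trivially.  The same argument applies to the diagonal
  \<open>C \<rightarrow> C \<times> C\<close>.  The walking isomorphism is fibrant (every category is) but not gaunt.\<close>

lemma category_Id_iso: "category C \<Longrightarrow> x \<in> Obj C \<Longrightarrow> iso C (Id C x)"
  unfolding iso_def category_def by metis

lemma iso_in_Arr: "iso C f \<Longrightarrow> f \<in> Arr C"
  unfolding iso_def by simp

lemma iso_Dom_in_Obj: "category C \<Longrightarrow> iso C f \<Longrightarrow> Dom C f \<in> Obj C"
  unfolding iso_def category_def by blast

lemma iso_prod_cat_iff: "iso (prod_cat A B) (f, g) \<longleftrightarrow> iso A f \<and> iso B g"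
  unfolding iso_def prod_cat_def by (auto; fastforce)

lemma restrict_eq_restrict_iff: "restrict f I = restrict g I \<longleftrightarrow> (\<forall>i\<in>I. f i = g i)"
  by (metis restrict_apply' restrict_ext)

lemma iso_pow_cat_iff:
  "iso (pow_cat I C) \<beta> \<longleftrightarrow> \<beta> \<in> I \<rightarrow>\<^sub>E Arr C \<and> (\<forall>i\<in>I. iso C (\<beta> i))"
proof
  assume "iso (pow_cat I C) \<beta>"
  then obtain \<gamma> where "\<beta> \<in> I \<rightarrow>\<^sub>E Arr C" "\<gamma> \<in> I \<rightarrow>\<^sub>E Arr C"
    and "\<forall>i\<in>I. Dom C (\<gamma> i) = Cod C (\<beta> i) \<and> Cod C (\<gamma> i) = Dom C (\<beta> i)
      \<and> Comp C (\<gamma> i) (\<beta> i) = Id C (Dom C (\<beta> i)) \<and> Comp C (\<beta> i) (\<gamma> i) = Id C (Cod C (\<beta> i))"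
    unfolding iso_def pow_cat_def by (auto simp: restrict_eq_restrict_iff)
  then show "\<beta> \<in> I \<rightarrow>\<^sub>E Arr C \<and> (\<forall>i\<in>I. iso C (\<beta> i))"
    unfolding iso_def by blast
next
  assume \<beta>: "\<beta> \<in> I \<rightarrow>\<^sub>E Arr C \<and> (\<forall>i\<in>I. iso C (\<beta> i))"
  then obtain \<gamma> where \<gamma>: "\<forall>i\<in>I. \<gamma> i \<in> Arr C \<and> Dom C (\<gamma> i) = Cod C (\<beta> i)
      \<and> Cod C (\<gamma> i) = Dom C (\<beta> i)
      \<and> Comp C (\<gamma> i) (\<beta> i) = Id C (Dom C (\<beta> i)) \<and> Comp C (\<beta> i) (\<gamma> i) = Id C (Cod C (\<beta> i))"
    unfolding iso_def by metis
  show "iso (pow_cat I C) \<beta>"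
    unfolding iso_def
  proof (intro conjI bexI)
    show "restrict \<gamma> I \<in> Arr (pow_cat I C)"
      using \<gamma> by (simp add: pow_cat_def)
  qed (use \<beta> \<gamma> in \<open>auto simp: pow_cat_def intro!: restrict_ext\<close>)
qed

lemma functor_diagonal: "category C \<Longrightarrow> functor C (prod_cat C C) (\<lambda>x. (x, x)) (\<lambda>u. (u, u))"
  unfolding functor_def category_def prod_cat_def by auto

lemma functor_const_pow_cat:
  "category C \<Longrightarrow> functor C (pow_cat I C) (\<lambda>x. restrict (\<lambda>_. x) I) (\<lambda>u. restrict (\<lambda>_. u) I)"
  unfolding functor_def category_def pow_cat_def by auto

lemma isofibration_diagonal_iff_gaunt:
  assumes C: "category C"
  shows "isofibration C (prod_cat C C) (\<lambda>x. (x, x)) (\<lambda>u. (u, u)) \<longleftrightarrow> gaunt C"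
proof
  assume fib: "isofibration C (prod_cat C C) (\<lambda>x. (x, x)) (\<lambda>u. (u, u))"
  show "gaunt C"
    unfolding gaunt_def
  proof (intro allI impI)
    fix f assume f: "iso C f"
    define a where "a = Dom C f"
    have a: "a \<in> Obj C"
      using iso_Dom_in_Obj[OF C f] by (simp add: a_def)
    have "iso (prod_cat C C) (f, Id C a)"
      using f category_Id_iso[OF C a] by (simp add: iso_prod_cat_iff)
    moreover have "Dom (prod_cat C C) (f, Id C a) = (a, a)"
      using C a by (simp add: prod_cat_def category_def a_def)
    ultimately obtain \<alpha> where "(\<alpha>, \<alpha>) = (f, Id C a)"
      using fib a unfolding isofibration_def by blast
    then show "f = Id C (Dom C f)"
      by (auto simp: a_def)
  qed
next
  assume gaunt: "gaunt C"
  show "isofibration C (prod_cat C C) (\<lambda>x. (x, x)) (\<lambda>u. (u, u))"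
    unfolding isofibration_def
  proof (intro conjI functor_diagonal[OF C] ballI allI impI)
    fix a \<beta>
    assume a: "a \<in> Obj C" and \<beta>: "iso (prod_cat C C) \<beta> \<and> Dom (prod_cat C C) \<beta> = (a, a)"
    obtain f h where \<beta>_eq: "\<beta> = (f, h)"
      by (cases \<beta>)
    have "iso C f" "iso C h" "Dom C f = a" "Dom C h = a"
      using \<beta> by (auto simp: \<beta>_eq iso_prod_cat_iff) (auto simp: prod_cat_def)
    then have "\<beta> = (Id C a, Id C a)"
      using gaunt by (auto simp: \<beta>_eq gaunt_def)
    then show "\<exists>\<alpha>. iso C \<alpha> \<and> Dom C \<alpha> = a \<and> (\<alpha>, \<alpha>) = \<beta>"
      using category_Id_iso[OF C a] C a unfolding category_def by auto
  qed
qed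

lemma isofibration_const_pow_cat_if_gaunt:
  assumes C: "category C" and gaunt: "gaunt C"
  shows "isofibration C (pow_cat I C) (\<lambda>x. restrict (\<lambda>_. x) I) (\<lambda>u. restrict (\<lambda>_. u) I)"
  unfolding isofibration_def
proof (intro conjI functor_const_pow_cat[OF C] ballI allI impI)
  fix a \<beta>
  assume a: "a \<in> Obj C"
    and \<beta>: "iso (pow_cat I C) \<beta> \<and> Dom (pow_cat I C) \<beta> = restrict (\<lambda>_. a) I"
  have "\<beta> \<in> I \<rightarrow>\<^sub>E Arr C" "\<forall>i\<in>I. iso C (\<beta> i)"
    using \<beta> by (auto simp: iso_pow_cat_iff)
  moreover have "\<forall>i\<in>I. Dom C (\<beta> i) = a"
    using \<beta> by (simp add: pow_cat_def restrict_eq_restrict_iff)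
  ultimately have "\<beta> \<in> I \<rightarrow>\<^sub>E Arr C" "\<forall>i\<in>I. \<beta> i = Id C a"
    using gaunt by (auto simp: gaunt_def)
  then have "\<beta> = restrict (\<lambda>_. Id C a) I"
    by (auto simp: PiE_def extensional_def)
  then show "\<exists>\<alpha>. iso C \<alpha> \<and> Dom C \<alpha> = a \<and> restrict (\<lambda>_. \<alpha>) I = \<beta>"
    using category_Id_iso[OF C a] C a unfolding category_def by auto
qed

lemma isofibration_const_pow_cat_iff_gaunt:
  assumes C: "category C" and ij: "i \<in> I" "j \<in> I" "i \<noteq> j"
  shows "isofibration C (pow_cat I C) (\<lambda>x. restrict (\<lambda>_. x) I) (\<lambda>u. restrict (\<lambda>_. u) I)
    \<longleftrightarrow> gaunt C"
proof
  assume fib: "isofibration C (pow_cat I C) (\<lambda>x. restrict (\<lambda>_. x) I) (\<lambda>u. restrict (\<lambda>_. u) I)"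
  show "gaunt C"
    unfolding gaunt_def
  proof (intro allI impI)
    fix f assume f: "iso C f"
    define a where "a = Dom C f"
    have a: "a \<in> Obj C"
      using iso_Dom_in_Obj[OF C f] by (simp add: a_def)
    define \<beta> where "\<beta> = restrict (\<lambda>k. if k = i then f else Id C a) I"
    have "iso (pow_cat I C) \<beta>"
      using f category_Id_iso[OF C a] by (auto simp: \<beta>_def iso_pow_cat_iff iso_in_Arr)
    moreover have "Dom (pow_cat I C) \<beta> = restrict (\<lambda>_. a) I"
      using C a by (auto simp: \<beta>_def pow_cat_def category_def a_def intro!: restrict_ext)
    ultimately obtain \<alpha> where "restrict (\<lambda>_. \<alpha>) I = \<beta>"
      using fib a unfolding isofibration_def by blast
    then have "\<alpha> = \<beta> i" "\<alpha> = \<beta> j"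
      using ij by (auto dest: fun_cong)
    then show "f = Id C (Dom C f)"
      using ij by (simp add: \<beta>_def a_def)
  qed
qed (rule isofibration_const_pow_cat_if_gaunt[OF C])

lemma nonid_into_1: "nonid_into 1 = {(0, 1, 0), (0, 0, 1)}"
  by (auto simp: nonid_into_def DG_def)

lemma p_fibrant_trivial_action_iff_gaunt:
  assumes C: "category C"
  shows "p_fibrant C (\<lambda>_ x. x) (\<lambda>_ u. u) \<longleftrightarrow> gaunt C"
proof
  assume "p_fibrant C (\<lambda>_ x. x) (\<lambda>_ u. u)"
  then have "isofibration C (pow_cat (nonid_into 1) C)
      (\<lambda>x. restrict (\<lambda>_. x) (nonid_into 1)) (\<lambda>u. restrict (\<lambda>_. u) (nonid_into 1))"
    unfolding p_fibrant_def match_obj_def match_arr_def by (simp add: DG_def)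
  moreover have "(0, 1, 0) \<in> nonid_into 1" "(0, 0, 1) \<in> nonid_into 1"
    unfolding nonid_into_1 by auto
  ultimately show "gaunt C"
    using isofibration_const_pow_cat_iff_gaunt[OF C] by (metis prod.inject zero_neq_one)
next
  assume "gaunt C"
  then show "p_fibrant C (\<lambda>_ x. x) (\<lambda>_ u. u)"
    unfolding p_fibrant_def match_obj_def match_arr_def
    using isofibration_const_pow_cat_if_gaunt[OF C] by blast
qed

lemma isofibration_to_unit_cat: "category C \<Longrightarrow> isofibration C unit_cat (\<lambda>_. ()) (\<lambda>_. ())"
  unfolding isofibration_def functor_def unit_cat_def
  using category_Id_iso iso_def category_def by fastforce

definition walking_iso :: "(bool, bool \<times> bool) cat" where
  "walking_iso = \<lparr> Obj = UNIV, Arr = UNIV, Dom = fst, Cod = snd, Id = (\<lambda>x. (x, x)),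
     Comp = (\<lambda>g f. (fst f, snd g)) \<rparr>"

lemma category_walking_iso: "category walking_iso"
  unfolding category_def walking_iso_def by auto

lemma not_gaunt_walking_iso: "\<not> gaunt walking_iso"
proof -
  have "iso walking_iso (False, True)"
    unfolding iso_def walking_iso_def by (auto intro!: bexI[of _ "(True, False)"])
  then show ?thesis
    unfolding gaunt_def walking_iso_def by force
qed

theorem mainTheorem7:
  fixes C :: "('o, 'm) cat"
  assumes "category C"
  shows "(p_fibrant C (\<lambda>_ x. x) (\<lambda>_ u. u) \<longleftrightarrow>
            isofibration C (prod_cat C C) (\<lambda>x. (x, x)) (\<lambda>u. (u, u)))
       \<and> (isofibration C (prod_cat C C) (\<lambda>x. (x, x)) (\<lambda>u. (u, u)) \<longleftrightarrow> gaunt C)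
       \<and> (\<exists>C' :: (bool, bool \<times> bool) cat. category C'
            \<and> isofibration C' unit_cat (\<lambda>_. ()) (\<lambda>_. ())
            \<and> \<not> p_fibrant C' (\<lambda>_ x. x) (\<lambda>_ u. u))"
proof -
  have "category walking_iso \<and> isofibration walking_iso unit_cat (\<lambda>_. ()) (\<lambda>_. ())
      \<and> \<not> p_fibrant walking_iso (\<lambda>_ x. x) (\<lambda>_ u. u)"
    using category_walking_iso isofibration_to_unit_cat not_gaunt_walking_iso
      p_fibrant_trivial_action_iff_gaunt by blast
  then show ?thesis
    using p_fibrant_trivial_action_iff_gaunt[OF assms] isofibration_diagonal_iff_gaunt[OF assms]
    by blast
qed

end
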